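(* Let $(X,\mu,S,T)$ be a free, magic, ergodic system with commuting transformations and let $\mathcal W=\mathcal I_S\vee\mathcal I_T$. Then the $\sigma$-algebra $\mathcal I_{T\times T}$ of $(T\times T)$-invariant sets of $(X^2,\mu_S)$ is measurable with respect to $\mathcal W\otimes\mathcal W$ (mod $\mu_S$-null sets); equivalently, for all $f_0,f_1\in L^\infty(\mu)$, \[\mathbb E(f_0\otimes f_1|\mathcal I_{T\times T})=\mathbb E\big(\mathbb E(f_0|\mathcal W)\otimes\mathbb E(f_1|\mathcal W)\,\big|\,\mathcal I_{T\times T}\big)\quad \mu_S\text{-a.e.}\]
   Context: $\mathcal I_R$ is the $\sigma$-algebra of $R$-invariant sets. $\mu_S$ is the measure on $X^2$ with $\int f_0\otimes f_1\,d\mu_S=\int\mathbb E(f_0|\mathcal I_S)\mathbb E(f_1|\mathcal I_S)\,d\mu$; it is invariant under $T\times T$. $\mu_{S,T}$ on $X^4$: $\int f_0\otimes f_1\otimes f_2\otimes f_3\,d\mu_{S,T}=\int\mathbb E(f_0\otimes f_1|\mathcal I_{T\times T})\mathbb E(f_2\otimes f_3|\mathcal I_{T\times T})\,d\mu_S$. $\|f\|_{\mu,S,T}=(\int f^{\otimes4}d\mu_{S,T})^{1/4}$. Magic: $\mathbb E(f|\mathcal I_S\vee\mathcal I_T)=0$ iff $\|f\|_{\mu,S,T}=0$. Free: $S^iT^j\neq{\rm id}$ for $(i,j)\neq(0,0)$. *)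

theory Defs
  imports "HOL-Probability.Probability"
begin

definition mpt :: "'a measure \<Rightarrow> ('a \<Rightarrow> 'a) \<Rightarrow> bool" where
  "mpt M T \<longleftrightarrow> T \<in> measurable M M \<and> distr M M T = M"

definition inv_mpt :: "'a measure \<Rightarrow> ('a \<Rightarrow> 'a) \<Rightarrow> bool" where
  "inv_mpt M T \<longleftrightarrow> mpt M T \<and> bij_betw T (space M) (space M)
      \<and> the_inv_into (space M) T \<in> measurable M M"

definition inv_sets :: "'a measure \<Rightarrow> ('a \<Rightarrow> 'a) \<Rightarrow> 'a set set" where
  "inv_sets M T = {A \<in> sets M. T -` A \<inter> space M = A}"

definition Inv :: "'a measure \<Rightarrow> ('a \<Rightarrow> 'a) \<Rightarrow> 'a measure" where
  "Inv M T = sigma (space M) (inv_sets M T)"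

definition Wjoin :: "'a measure \<Rightarrow> ('a \<Rightarrow> 'a) \<Rightarrow> ('a \<Rightarrow> 'a) \<Rightarrow> 'a measure" where
  "Wjoin M S T = sigma (space M) (inv_sets M S \<union> inv_sets M T)"

text \<open>Bounded measurable real functions (representatives of L-infinity).\<close>
definition bdd_meas :: "'a measure \<Rightarrow> ('a \<Rightarrow> real) \<Rightarrow> bool" where
  "bdd_meas M f \<longleftrightarrow> f \<in> borel_measurable M \<and> (\<exists>B. \<forall>x\<in>space M. \<bar>f x\<bar> \<le> B)"

definition tensor :: "('a \<Rightarrow> real) \<Rightarrow> ('a \<Rightarrow> real) \<Rightarrow> 'a \<times> 'a \<Rightarrow> real" where
  "tensor f g = (\<lambda>z. f (fst z) * g (snd z))"

definition is_muS :: "'a measure \<Rightarrow> ('a \<Rightarrow> 'a) \<Rightarrow> ('a \<times> 'a) measure \<Rightarrow> bool" where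
  "is_muS M S \<mu>S \<longleftrightarrow> prob_space \<mu>S \<and> sets \<mu>S = sets (M \<Otimes>\<^sub>M M) \<and>
     (\<forall>f0 f1. bdd_meas M f0 \<longrightarrow> bdd_meas M f1 \<longrightarrow>
        integral\<^sup>L \<mu>S (tensor f0 f1)
        = integral\<^sup>L M (\<lambda>x. real_cond_exp M (Inv M S) f0 x * real_cond_exp M (Inv M S) f1 x))"

text \<open>Fourth power of the seminorm: by definition of mu_{S,T} with f0=f1=f2=f3=f,
  the integral of f tensor 4 is the integral of E(f tensor f | I_{TxT})^2 dmu_S.\<close>
definition seminorm4 :: "'a measure \<Rightarrow> ('a \<Rightarrow> 'a) \<Rightarrow> ('a \<times> 'a) measure \<Rightarrow> ('a \<Rightarrow> real) \<Rightarrow> real" where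
  "seminorm4 M T \<mu>S f = integral\<^sup>L \<mu>S (\<lambda>z. (real_cond_exp \<mu>S (Inv \<mu>S (map_prod T T)) (tensor f f) z)\<^sup>2)"

definition magic :: "'a measure \<Rightarrow> ('a \<Rightarrow> 'a) \<Rightarrow> ('a \<Rightarrow> 'a) \<Rightarrow> bool" where
  "magic M S T \<longleftrightarrow> (\<forall>\<mu>S. is_muS M S \<mu>S \<longrightarrow> (\<forall>f. bdd_meas M f \<longrightarrow>
      ((AE x in M. real_cond_exp M (Wjoin M S T) f x = 0) \<longleftrightarrow> seminorm4 M T \<mu>S f = 0)))"

text \<open>Free: S^i T^j is not the identity (mod mu) for (i,j) ~= (0,0); for invertible S,T
  this is: S^a T^b ~= S^c T^d a.e. whenever (a,b) ~= (c,d) in N^2.\<close>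
definition free :: "'a measure \<Rightarrow> ('a \<Rightarrow> 'a) \<Rightarrow> ('a \<Rightarrow> 'a) \<Rightarrow> bool" where
  "free M S T \<longleftrightarrow> (\<forall>a b c d::nat. (a, b) \<noteq> (c, d) \<longrightarrow>
      \<not> (AE x in M. (S ^^ a) ((T ^^ b) x) = (S ^^ c) ((T ^^ d) x)))"

definition ergodic2 :: "'a measure \<Rightarrow> ('a \<Rightarrow> 'a) \<Rightarrow> ('a \<Rightarrow> 'a) \<Rightarrow> bool" where
  "ergodic2 M S T \<longleftrightarrow> (\<forall>A \<in> inv_sets M S \<inter> inv_sets M T. emeasure M A = 0 \<or> emeasure M A = 1)"

definition comm_system :: "'a measure \<Rightarrow> ('a \<Rightarrow> 'a) \<Rightarrow> ('a \<Rightarrow> 'a) \<Rightarrow> bool" where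
  "comm_system M S T \<longleftrightarrow> prob_space M \<and> inv_mpt M S \<and> inv_mpt M T \<and>
      (\<forall>x\<in>space M. S (T x) = T (S x))"

end

theory Submission
  imports Defs
begin

(*
  Write f = E(f|W) + g with E(g|W) = 0 (clipping keeps both parts bounded). By magic,
  E(g (x) g | I_TxT) = 0. A van der Corput argument then kills E(g (x) v | I_TxT) for every
  bounded v: for a convex combination A of the powers of T x T, the projection onto the invariant
  functions satisfies ||E(F | I_TxT)|| <= ||A F||, and by the defining property of mu_S,
  ||A (g (x) v)||^2 is a positive combination of inner products in L^2(mu) of conditional
  expectations on I_S of products of shifts of g and of v, so Cauchy-Schwarz gives
  ||A (g (x) v)||^2 <= ||A (g (x) g)|| ||A (v (x) v)||. The mean ergodic theorem makes
  ||A (g (x) g)|| arbitrarily small. Expanding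
  f0 (x) f1 = E(f0|W) (x) E(f1|W) + g0 (x) f1 + E(f0|W) (x) g1 concludes.
*)

lemma discriminant_le_of_nonneg_quadratic:
  fixes a b c :: real
  assumes nonneg: "\<And>t. 0 \<le> a - 2 * t * b + t\<^sup>2 * c" and "0 \<le> c"
  shows "b\<^sup>2 \<le> a * c"
proof (cases "c = 0")
  case False
  then have "0 < c" using \<open>0 \<le> c\<close> by simp
  have "0 \<le> a - 2 * (b / c) * b + (b / c)\<^sup>2 * c" by (rule nonneg)
  also have "\<dots> = a - b\<^sup>2 / c" using \<open>0 < c\<close> by (simp add: power2_eq_square field_simps)
  finally show ?thesis using \<open>0 < c\<close> by (simp add: field_simps)
next
  case True
  have "b = 0"
  proof (rule ccontr)
    assume "b \<noteq> 0"
    have "0 \<le> a - 2 * ((a + 1) / (2 * b)) * b + ((a + 1) / (2 * b))\<^sup>2 * c" by (rule nonneg)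
    then show False using \<open>b \<noteq> 0\<close> True by (simp add: field_simps)
  qed
  then show ?thesis using True by simp
qed

lemma Cauchy_Schwarz_ineq_integral:
  fixes f g :: "'a \<Rightarrow> real"
  assumes [simp]: "integrable M (\<lambda>x. (f x)\<^sup>2)" "integrable M (\<lambda>x. (g x)\<^sup>2)" "integrable M (\<lambda>x. f x * g x)"
  shows "(\<integral>x. f x * g x \<partial>M)\<^sup>2 \<le> (\<integral>x. (f x)\<^sup>2 \<partial>M) * (\<integral>x. (g x)\<^sup>2 \<partial>M)"
proof (rule discriminant_le_of_nonneg_quadratic)
  fix t :: real
  have "(\<integral>x. (f x - t * g x)\<^sup>2 \<partial>M) = (\<integral>x. (f x)\<^sup>2 - 2 * t * (f x * g x) + t\<^sup>2 * (g x)\<^sup>2 \<partial>M)"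
    by (rule Bochner_Integration.integral_cong) (auto simp: power2_eq_square algebra_simps)
  moreover have "0 \<le> (\<integral>x. (f x - t * g x)\<^sup>2 \<partial>M)" by simp
  ultimately show "0 \<le> (\<integral>x. (f x)\<^sup>2 \<partial>M) - 2 * t * (\<integral>x. f x * g x \<partial>M) + t\<^sup>2 * (\<integral>x. (g x)\<^sup>2 \<partial>M)"
    by simp
qed simp

lemma Cauchy_Schwarz_ineq_weighted_sum:
  fixes w a b :: "'i \<Rightarrow> real"
  assumes "\<And>i. i \<in> A \<Longrightarrow> 0 \<le> w i"
  shows "(\<Sum>i\<in>A. w i * (a i * b i)) \<le> sqrt (\<Sum>i\<in>A. w i * (a i)\<^sup>2) * sqrt (\<Sum>i\<in>A. w i * (b i)\<^sup>2)"
proof -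
  have "(\<Sum>i\<in>A. (sqrt (w i) * a i) * (sqrt (w i) * b i))\<^sup>2
     \<le> (\<Sum>i\<in>A. (sqrt (w i) * a i)\<^sup>2) * (\<Sum>i\<in>A. (sqrt (w i) * b i)\<^sup>2)"
    by (rule Cauchy_Schwarz_ineq_sum)
  also have "(\<Sum>i\<in>A. (sqrt (w i) * a i) * (sqrt (w i) * b i)) = (\<Sum>i\<in>A. w i * (a i * b i))"
    by (rule sum.cong) (use assms in \<open>auto simp: algebra_simps\<close>)
  also have "(\<Sum>i\<in>A. (sqrt (w i) * a i)\<^sup>2) = (\<Sum>i\<in>A. w i * (a i)\<^sup>2)"
    by (rule sum.cong) (use assms in \<open>auto simp: power_mult_distrib\<close>)
  also have "(\<Sum>i\<in>A. (sqrt (w i) * b i)\<^sup>2) = (\<Sum>i\<in>A. w i * (b i)\<^sup>2)"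
    by (rule sum.cong) (use assms in \<open>auto simp: power_mult_distrib\<close>)
  finally show ?thesis
    by (metis real_le_rsqrt real_sqrt_mult)
qed

lemma convergent_of_summable_abs_diff:
  fixes x :: "nat \<Rightarrow> real"
  assumes "summable (\<lambda>j. \<bar>x (Suc j) - x j\<bar>)"
  shows "convergent x"
proof -
  have "convergent (\<lambda>n. \<Sum>j<n. x (Suc j) - x j)"
    using summable_rabs_cancel[OF assms] by (simp add: summable_iff_convergent)
  then have "convergent (\<lambda>n. (x n - x 0) + x 0)"
    by (intro convergent_add convergent_const) (simp add: sum_lessThan_telescope)
  then show ?thesis by simp
qed

lemma nonpos_of_le_small_mult:
  fixes X C :: real
  assumes small: "\<And>e. 0 < e \<Longrightarrow> \<exists>a. 0 \<le> a \<and> a < e \<and> X \<le> a * C" and "0 \<le> C"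
  shows "X \<le> 0"
proof (rule field_le_epsilon)
  fix e :: real assume "0 < e"
  then obtain a where a: "0 \<le> a" "a < e / (C + 1)" "X \<le> a * C"
    using small[of "e / (C + 1)"] \<open>0 \<le> C\<close> by auto
  have "a * C \<le> e / (C + 1) * C" using a \<open>0 \<le> C\<close> by (intro mult_right_mono) auto
  also have "\<dots> \<le> e" using \<open>0 < e\<close> \<open>0 \<le> C\<close> by (simp add: field_simps)
  finally show "X \<le> 0 + e" using a by simp
qed

lemma AE_abs_mult_le:
  fixes f g :: "'a \<Rightarrow> real"
  assumes "AE x in M. \<bar>f x\<bar> \<le> A" "AE x in M. \<bar>g x\<bar> \<le> B"
  shows "AE x in M. \<bar>f x * g x\<bar> \<le> A * B"
  using assms by eventually_elim (simp add: abs_mult mult_mono')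

lemma (in finite_measure) integrable_AE_abs_bounded:
  fixes f :: "'a \<Rightarrow> real"
  shows "f \<in> borel_measurable M \<Longrightarrow> AE x in M. \<bar>f x\<bar> \<le> B \<Longrightarrow> integrable M f"
  by (rule integrable_const_bound) simp_all

lemma (in finite_measure) integrable_mult_AE_abs_bounded:
  fixes f g :: "'a \<Rightarrow> real"
  assumes "f \<in> borel_measurable M" "g \<in> borel_measurable M"
    and "AE x in M. \<bar>f x\<bar> \<le> A" "AE x in M. \<bar>g x\<bar> \<le> B"
  shows "integrable M (\<lambda>x. f x * g x)"
  by (rule integrable_AE_abs_bounded[OF _ AE_abs_mult_le[OF assms(3,4)]]) (use assms in simp)

lemma (in finite_measure) integrable_square_AE_abs_bounded:
  fixes f :: "'a \<Rightarrow> real"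
  assumes "f \<in> borel_measurable M" "AE x in M. \<bar>f x\<bar> \<le> B"
  shows "integrable M (\<lambda>x. (f x)\<^sup>2)"
  using integrable_mult_AE_abs_bounded[OF assms(1,1,2,2)] by (simp add: power2_eq_square)

lemma (in finite_measure) integral_bounded_convergence:
  fixes s :: "nat \<Rightarrow> 'a \<Rightarrow> real"
  assumes "f \<in> borel_measurable M" "\<And>i. s i \<in> borel_measurable M"
    "AE x in M. (\<lambda>i. s i x) \<longlonglongrightarrow> f x" "\<And>i. AE x in M. \<bar>s i x\<bar> \<le> C"
  shows "(\<lambda>i. \<integral>x. s i x \<partial>M) \<longlonglongrightarrow> (\<integral>x. f x \<partial>M)"
  by (rule integral_dominated_convergence[where w="\<lambda>_. C"]) (use assms in auto)

lemma (in sigma_finite_subalgebra) real_cond_exp_abs_le: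
  assumes "integrable M f" "AE x in M. \<bar>f x\<bar> \<le> B"
  shows "AE x in M. \<bar>real_cond_exp M F f x\<bar> \<le> B"
proof -
  have "AE x in M. real_cond_exp M F f x \<le> B"
    by (rule real_cond_exp_le_c) (use assms in auto)
  moreover have "AE x in M. real_cond_exp M F f x \<ge> -B"
    by (rule real_cond_exp_ge_c) (use assms in auto)
  ultimately show ?thesis by auto
qed

lemma bdd_meas_nonneg_bound:
  assumes "bdd_meas M f"
  obtains B where "0 \<le> B" "\<And>x. x \<in> space M \<Longrightarrow> \<bar>f x\<bar> \<le> B"
  using assms unfolding bdd_meas_def by (meson abs_ge_zero order_trans)

lemma bdd_meas_AE_bound:
  assumes "bdd_meas M f"
  obtains B where "0 \<le> B" "AE x in M. \<bar>f x\<bar> \<le> B"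
  using bdd_meas_nonneg_bound[OF assms] by (metis AE_I2)

lemma bdd_meas_measurable[measurable_dest]: "bdd_meas M f \<Longrightarrow> f \<in> borel_measurable M"
  by (simp add: bdd_meas_def)

lemma (in finite_measure) bdd_meas_integrable: "bdd_meas M f \<Longrightarrow> integrable M f"
  by (metis bdd_meas_AE_bound bdd_meas_measurable integrable_AE_abs_bounded)

lemma (in finite_measure) bdd_meas_cond_exp_decomposition:
  assumes F: "sigma_finite_subalgebra M F" and f: "bdd_meas M f"
  obtains h g where "bdd_meas M h" "bdd_meas M g" "AE x in M. h x = real_cond_exp M F f x"
    "\<And>x. f x = h x + g x" "AE x in M. real_cond_exp M F g x = 0"
proof -
  interpret F: sigma_finite_subalgebra M F by (rule F)
  obtain B where B: "0 \<le> B" "\<And>x. x \<in> space M \<Longrightarrow> \<bar>f x\<bar> \<le> B" using bdd_meas_nonneg_bound[OF f] by blast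
  have [measurable]: "f \<in> borel_measurable M" using f by auto
  \<comment> \<open>Clipping gives a bounded version of the conditional expectation that is still F-measurable.\<close>
  define h where "h x = max (-B) (min B (real_cond_exp M F f x))" for x
  define g where "g x = f x - h x" for x
  have h_F[measurable]: "h \<in> borel_measurable F" unfolding h_def by measurable
  have [measurable]: "h \<in> borel_measurable M" by (rule measurable_from_subalg[OF F.subalg h_F])
  have h_bound: "\<bar>h x\<bar> \<le> B" for x unfolding h_def using B(1) by auto
  have h: "bdd_meas M h" using h_bound by (auto simp: bdd_meas_def)
  have g: "bdd_meas M g" unfolding bdd_meas_def g_def
    using B(2) h_bound by (auto intro!: exI[of _ "B + B"] abs_triangle_ineq4[THEN order_trans] add_mono)
  have "AE x in M. \<bar>real_cond_exp M F f x\<bar> \<le> B"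
    by (rule F.real_cond_exp_abs_le[OF bdd_meas_integrable[OF f]]) (use B in auto)
  then have hE: "AE x in M. h x = real_cond_exp M F f x" by eventually_elim (auto simp: h_def)
  have "AE x in M. real_cond_exp M F g x = real_cond_exp M F f x - real_cond_exp M F h x"
    unfolding g_def by (rule F.real_cond_exp_diff) (use bdd_meas_integrable f h in auto)
  moreover have "AE x in M. real_cond_exp M F h x = h x"
    by (rule F.real_cond_exp_F_meas) (use bdd_meas_integrable[OF h] in auto)
  ultimately have "AE x in M. real_cond_exp M F g x = 0" using hE by eventually_elim simp
  moreover have "f x = h x + g x" for x by (simp add: g_def)
  ultimately show ?thesis using that[OF h g hE] by blast
qed

lemma (in prob_space) AE_convergent_of_square_steps:
  fixes \<phi> :: "nat \<Rightarrow> 'a \<Rightarrow> real"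
  assumes [measurable]: "\<And>j. \<phi> j \<in> borel_measurable M"
    and bound: "\<And>j. AE x in M. \<bar>\<phi> j x\<bar> \<le> B"
    and step: "\<And>j. (\<integral>x. (\<phi> (Suc j) x - \<phi> j x)\<^sup>2 \<partial>M) \<le> 4 * (1/4)^j"
  shows "AE x in M. convergent (\<lambda>j. \<phi> j x)"
proof -
  define D where "D j x = \<bar>\<phi> (Suc j) x - \<phi> j x\<bar>" for j x
  have [measurable]: "D j \<in> borel_measurable M" for j unfolding D_def by measurable
  have D_bound: "AE x in M. \<bar>D j x\<bar> \<le> 2 * B" for j
    using bound[of j] bound[of "Suc j"] unfolding D_def by eventually_elim auto
  have int_D: "integrable M (D j)" for j by (rule integrable_AE_abs_bounded[OF _ D_bound]) measurable
  have int_D_le: "(\<integral>x. D j x \<partial>M) \<le> 2 * (1/2)^j" for j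
  proof -
    have "(\<integral>x. D j x \<partial>M)\<^sup>2 \<le> (\<integral>x. (D j x)\<^sup>2 \<partial>M) * (\<integral>x. 1\<^sup>2 \<partial>M)"
      using Cauchy_Schwarz_ineq_integral[of M "D j" "\<lambda>_. 1"]
        integrable_square_AE_abs_bounded[OF _ D_bound] int_D by simp
    also have "\<dots> \<le> 4 * (1/4)^j" using step[of j] by (simp add: D_def prob_space)
    also have "\<dots> = (2 * (1/2)^j)\<^sup>2" by (simp add: power2_eq_square power_mult_distrib[symmetric])
    finally show ?thesis by (rule power2_le_imp_le) simp
  qed
  have "(\<integral>\<^sup>+x. (\<Sum>j. ennreal (D j x)) \<partial>M) = (\<Sum>j. \<integral>\<^sup>+x. ennreal (D j x) \<partial>M)"
    by (rule nn_integral_suminf) measurable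
  also have "\<dots> = (\<Sum>j. ennreal (\<integral>x. D j x \<partial>M))"
    by (intro arg_cong[where f=suminf] ext nn_integral_eq_integral[OF int_D]) (auto simp: D_def)
  also have "\<dots> \<le> (\<Sum>j. ennreal (2 * (1/2)^j))"
    by (intro suminf_le summableI) (use int_D_le in \<open>auto intro: ennreal_leI\<close>)
  also have "\<dots> = ennreal (\<Sum>j. 2 * (1/2)^j)"
    by (rule suminf_ennreal2) (auto intro!: summable_mult summable_geometric)
  finally have "(\<integral>\<^sup>+x. (\<Sum>j. ennreal (D j x)) \<partial>M) \<noteq> \<infinity>"
    using neq_top_trans[OF ennreal_neq_top] by simp
  then have "AE x in M. (\<Sum>j. ennreal (D j x)) \<noteq> \<infinity>" by (rule nn_integral_PInf_AE[rotated]) measurable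
  then show ?thesis
  proof eventually_elim
    case (elim x)
    then have "summable (\<lambda>j. D j x)" by (intro summable_suminf_not_top) (auto simp: D_def)
    then show ?case unfolding D_def by (rule convergent_of_summable_abs_diff)
  qed
qed

lemma AE_abs_limit_le:
  fixes \<phi> :: "nat \<Rightarrow> 'a \<Rightarrow> real"
  assumes "AE x in M. (\<lambda>j. \<phi> j x) \<longlonglongrightarrow> h x" "\<And>j. AE x in M. \<bar>\<phi> j x\<bar> \<le> B"
  shows "AE x in M. \<bar>h x\<bar> \<le> B"
proof -
  have "AE x in M. \<forall>j. \<bar>\<phi> j x\<bar> \<le> B" using assms(2) by (simp add: AE_all_countable)
  with assms(1) show ?thesis
  proof eventually_elim
    case (elim x)
    show ?case by (rule LIMSEQ_le_const2[OF tendsto_rabs[OF elim(1)]]) (use elim(2) in auto)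
  qed
qed

lemma sets_Inv: "sets (Inv M T) = sigma_sets (space M) (inv_sets M T)"
  unfolding Inv_def inv_sets_def
  by (rule sets_measure_of) (auto dest: sets.sets_into_space)

lemma space_Inv: "space (Inv M T) = space M"
  unfolding Inv_def inv_sets_def
  by (rule space_measure_of) (auto dest: sets.sets_into_space)

lemma subalgebra_Inv: "subalgebra M (Inv M T)"
  unfolding subalgebra_def sets_Inv space_Inv
  by (auto intro!: sets.sigma_sets_subset simp: inv_sets_def)

lemma sigma_finite_subalgebra_Inv: "finite_measure M \<Longrightarrow> sigma_finite_subalgebra M (Inv M T)"
  by (rule finite_measure_subalgebra_is_sigma_finite)
     (simp add: finite_measure_subalgebra_def finite_measure_subalgebra_axioms_def subalgebra_Inv)

lemma sets_Inv_vimage: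
  assumes "T \<in> space M \<rightarrow> space M" "A \<in> sets (Inv M T)"
  shows "T -` A \<inter> space M = A"
proof -
  have "A \<in> sigma_sets (space M) (inv_sets M T)" using assms(2) sets_Inv by metis
  then have "A \<in> sets M \<and> T -` A \<inter> space M = A"
  proof induction
    case (Union a)
    then have "(\<Union>i. a i) \<in> sets M" by auto
    moreover have "T -` (\<Union>i. a i) \<inter> space M = (\<Union>i. a i)"
      using Union by (auto simp: set_eq_iff)
    ultimately show ?case by simp
  qed (use assms(1) in \<open>auto simp: inv_sets_def\<close>)
  then show ?thesis ..
qed

lemma measurable_Inv_invariant:
  fixes \<phi> :: "'a \<Rightarrow> 'b::t1_space"
  assumes "T \<in> space M \<rightarrow> space M" "\<phi> \<in> borel_measurable (Inv M T)" "x \<in> space M"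
  shows "\<phi> (T x) = \<phi> x"
proof -
  let ?A = "\<phi> -` {\<phi> x} \<inter> space (Inv M T)"
  have "?A \<in> sets (Inv M T)" by (rule measurable_sets[OF assms(2)]) simp
  then have "T -` ?A \<inter> space M = ?A" by (rule sets_Inv_vimage[OF assms(1)])
  moreover have "x \<in> ?A" using assms(3) by (simp add: space_Inv)
  ultimately show ?thesis by blast
qed

lemma measurable_Inv_of_invariant:
  assumes "T \<in> space M \<rightarrow> space M" "h \<in> borel_measurable M" "\<And>x. x \<in> space M \<Longrightarrow> h (T x) = h x"
  shows "h \<in> borel_measurable (Inv M T)"
proof (rule borel_measurableI)
  fix U :: "'b set" assume "open U"
  then have "h -` U \<inter> space M \<in> sets M" using assms(2) by (simp add: borel_open measurable_sets)
  moreover have "T -` (h -` U \<inter> space M) \<inter> space M = h -` U \<inter> space M"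
    using assms(1,3) by auto
  ultimately have "h -` U \<inter> space M \<in> inv_sets M T" by (simp add: inv_sets_def)
  then show "h -` U \<inter> space (Inv M T) \<in> sets (Inv M T)"
    by (simp add: sets_Inv space_Inv)
qed

lemma measurable_Inv_commuting:
  assumes R: "R \<in> measurable M M" and S: "S \<in> space M \<rightarrow> space M"
    and comm: "\<And>x. x \<in> space M \<Longrightarrow> R (S x) = S (R x)"
  shows "R \<in> measurable (Inv M S) (Inv M S)"
  unfolding Inv_def
proof (rule measurable_measure_of)
  have sp: "space (sigma (space M) (inv_sets M S)) = space M"
    using space_Inv[of M S] by (simp add: Inv_def)
  show "inv_sets M S \<subseteq> Pow (space M)" by (auto simp: inv_sets_def dest: sets.sets_into_space)
  show "R \<in> space (sigma (space M) (inv_sets M S)) \<rightarrow> space M"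
    using measurable_space[OF R] sp by auto
  fix A assume A: "A \<in> inv_sets M S"
  have "R -` A \<inter> space M \<in> sets M" using A R by (auto simp: inv_sets_def)
  moreover have "S -` (R -` A \<inter> space M) \<inter> space M = R -` A \<inter> space M"
    using A S comm measurable_space[OF R] by (auto simp: inv_sets_def set_eq_iff Pi_iff)
  ultimately have "R -` A \<inter> space M \<in> inv_sets M S" by (simp add: inv_sets_def)
  then show "R -` A \<inter> space (sigma (space M) (inv_sets M S)) \<in> sets (sigma (space M) (inv_sets M S))"
    by (simp add: sp sets_Inv[of M S, unfolded Inv_def])
qed

lemma sets_Wjoin: "sets (Wjoin M S T) = sigma_sets (space M) (inv_sets M S \<union> inv_sets M T)"
  unfolding Wjoin_def inv_sets_def
  by (rule sets_measure_of) (auto dest: sets.sets_into_space)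

lemma space_Wjoin: "space (Wjoin M S T) = space M"
  unfolding Wjoin_def inv_sets_def
  by (rule space_measure_of) (auto dest: sets.sets_into_space)

lemma subalgebra_Wjoin: "subalgebra M (Wjoin M S T)"
  unfolding subalgebra_def sets_Wjoin space_Wjoin
  by (auto intro!: sets.sigma_sets_subset simp: inv_sets_def)

definition convex_weights :: "(nat \<Rightarrow> real) \<Rightarrow> nat \<Rightarrow> bool" where
  "convex_weights c K \<longleftrightarrow> (\<forall>k<K. 0 \<le> c k) \<and> (\<Sum>k<K. c k) = 1"

definition orbit_average :: "('a \<Rightarrow> 'a) \<Rightarrow> (nat \<Rightarrow> real) \<Rightarrow> nat \<Rightarrow> ('a \<Rightarrow> real) \<Rightarrow> 'a \<Rightarrow> real" where
  "orbit_average T c K W x = (\<Sum>k<K. c k * W ((T ^^ k) x))"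

lemma convex_weights_one: "convex_weights (\<lambda>_. 1) 1"
  by (simp add: convex_weights_def)

lemma orbit_average_midpoint:
  assumes "convex_weights c K" "convex_weights c' K'"
  obtains c'' K'' where "convex_weights c'' K''"
    "\<And>x. orbit_average T c'' K'' W x = (orbit_average T c K W x + orbit_average T c' K' W x) / 2"
proof -
  define pad where "pad d L k = (if k < L then d k else 0)" for d :: "nat \<Rightarrow> real" and L k
  define c'' where "c'' k = (pad c K k + pad c' K' k) / 2" for k
  have pad_sum: "(\<Sum>k<max K K'. pad d L k * a k) = (\<Sum>k<L. d k * a k)"
    if "L \<le> max K K'" for d L and a :: "nat \<Rightarrow> real"
  proof -
    have "{k \<in> {..<max K K'}. k < L} = {..<L}" using that by auto
    then have "(\<Sum>k<max K K'. if k < L then d k * a k else 0) = (\<Sum>k<L. d k * a k)"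
      using sum.inter_filter[of "{..<max K K'}" "\<lambda>k. d k * a k" "\<lambda>k. k < L"] by simp
    moreover have "pad d L k * a k = (if k < L then d k * a k else 0)" for k by (simp add: pad_def)
    ultimately show ?thesis by simp
  qed
  have avg: "orbit_average T c'' (max K K') W x
      = (\<Sum>k<max K K'. pad c K k * W ((T ^^ k) x) + pad c' K' k * W ((T ^^ k) x)) / 2" for x
    unfolding orbit_average_def c''_def sum_divide_distrib by (intro sum.cong) (auto simp: field_simps)
  have "(\<Sum>k<max K K'. c'' k) = ((\<Sum>k<max K K'. pad c K k * 1) + (\<Sum>k<max K K'. pad c' K' k * 1)) / 2"
    by (simp add: c''_def sum_divide_distrib[symmetric] sum.distrib)
  then have "convex_weights c'' (max K K')"
    using assms by (simp only: pad_sum) (auto simp: convex_weights_def c''_def pad_def)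
  moreover have "orbit_average T c'' (max K K') W x
      = (orbit_average T c K W x + orbit_average T c' K' W x) / 2" for x
    unfolding avg sum.distrib by (simp only: pad_sum) (simp add: orbit_average_def)
  ultimately show ?thesis by (rule that)
qed

lemma orbit_average_shift:
  assumes "convex_weights c K"
  obtains c' K' where "convex_weights c' K'" "\<And>x. orbit_average T c' K' W x = orbit_average T c K W (T x)"
proof
  show "convex_weights (\<lambda>k. if k = 0 then 0 else c (k - 1)) (Suc K)"
    using assms unfolding convex_weights_def sum.lessThan_Suc_shift by (auto simp: less_Suc_eq_0_disj)
  show "orbit_average T (\<lambda>k. if k = 0 then 0 else c (k - 1)) (Suc K) W x = orbit_average T c K W (T x)" for x
    unfolding orbit_average_def sum.lessThan_Suc_shift by (simp add: funpow_swap1)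
qed

lemma abs_orbit_average_le:
  assumes "convex_weights c K" "\<And>k. \<bar>W ((T ^^ k) x)\<bar> \<le> B"
  shows "\<bar>orbit_average T c K W x\<bar> \<le> B"
proof -
  have "\<bar>orbit_average T c K W x\<bar> \<le> (\<Sum>k<K. \<bar>c k * W ((T ^^ k) x)\<bar>)"
    unfolding orbit_average_def by (rule sum_abs)
  also have "\<dots> \<le> (\<Sum>k<K. c k * B)"
    using assms by (intro sum_mono) (simp add: convex_weights_def abs_mult mult_left_mono)
  also have "\<dots> = B" using assms(1) by (simp add: convex_weights_def sum_distrib_right[symmetric])
  finally show ?thesis .
qed

definition lag_product :: "('a \<Rightarrow> 'a) \<Rightarrow> ('a \<Rightarrow> real) \<Rightarrow> nat \<Rightarrow> nat \<Rightarrow> 'a \<Rightarrow> real" where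
  "lag_product T u k l x = u ((T ^^ k) x) * u ((T ^^ l) x)"

lemma orbit_average_tensor_square:
  "(orbit_average (map_prod T T) c K (tensor u v) z)\<^sup>2
    = (\<Sum>k<K. \<Sum>l<K. c k * c l * tensor (lag_product T u k l) (lag_product T v k l) z)"
proof -
  have "(map_prod T T ^^ n) z = ((T ^^ n) (fst z), (T ^^ n) (snd z))" for n
    by (induction n) (auto simp: map_prod_def split: prod.split)
  then show ?thesis
    unfolding orbit_average_def power2_eq_square sum_product
    by (intro sum.cong refl) (simp add: tensor_def lag_product_def)
qed

locale prob_mpt = prob_space M for M :: "'a measure" +
  fixes T :: "'a \<Rightarrow> 'a"
  assumes mpt: "mpt M T"
begin

lemma measurable_T[measurable]: "T \<in> measurable M M"
  using mpt by (simp add: mpt_def)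

lemma T_in_space: "T \<in> space M \<rightarrow> space M"
  using measurable_space[OF measurable_T] by blast

lemma distr_funpow: "distr M M (T ^^ n) = M"
proof (induction n)
  case (Suc n)
  have "distr M M (T ^^ Suc n) = distr (distr M M (T ^^ n)) M T"
    by (simp add: distr_distr comp_def)
  also have "\<dots> = M" using mpt by (simp add: Suc.IH mpt_def)
  finally show ?case .
qed (simp add: id_def)

lemma integral_funpow: "g \<in> borel_measurable M \<Longrightarrow> (\<integral>x. g ((T ^^ n) x) \<partial>M) = (\<integral>x. g x \<partial>M)"
  for g :: "'a \<Rightarrow> real"
  using integral_distr[of "T ^^ n" M M g] distr_funpow by simp

lemma integral_T: "g \<in> borel_measurable M \<Longrightarrow> (\<integral>x. g (T x) \<partial>M) = (\<integral>x. g x \<partial>M)"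
  for g :: "'a \<Rightarrow> real"
  using integral_funpow[of g 1] by simp

lemma AE_funpow:
  assumes "AE x in M. P x"
  shows "AE x in M. P ((T ^^ n) x)"
proof -
  have "AE x in distr M M (T ^^ n). P x" unfolding distr_funpow by (rule assms)
  then show ?thesis by (rule AE_distrD[rotated]) simp
qed

lemma AE_invariant_funpow:
  assumes "AE x in M. h (T x) = h x"
  shows "AE x in M. h ((T ^^ n) x) = h x"
proof (induction n)
  case (Suc n)
  from AE_funpow[OF assms, of n] Suc show ?case by eventually_elim simp
qed simp

sublocale Inv: sigma_finite_subalgebra M "Inv M T"
  by (rule sigma_finite_subalgebra_Inv) unfold_locales

lemma AE_invariant_Inv_version:
  fixes h :: "'a \<Rightarrow> real"
  assumes [measurable]: "h \<in> borel_measurable M" and inv: "AE x in M. h (T x) = h x"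
  obtains h' where "h' \<in> borel_measurable (Inv M T)" "AE x in M. h' x = h x"
proof
  define h' where "h' x = lim (\<lambda>n. h ((T ^^ n) x))" for x
  have "h' \<in> borel_measurable M" unfolding h'_def by measurable
  moreover have "h' (T x) = h' x" for x
  proof -
    have "h' (T x) = lim (\<lambda>n. h ((T ^^ Suc n) x))"
      unfolding h'_def by (simp only: funpow_Suc_right o_apply)
    also have "\<dots> = h' x"
      unfolding h'_def lim_def by (simp only: filterlim_sequentially_Suc[of "\<lambda>n. h ((T ^^ n) x)"])
    finally show ?thesis .
  qed
  ultimately show "h' \<in> borel_measurable (Inv M T)"
    by (intro measurable_Inv_of_invariant[OF T_in_space])
  have "AE x in M. \<forall>n. h ((T ^^ n) x) = h x"
    by (simp add: AE_all_countable AE_invariant_funpow[OF inv])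
  then show "AE x in M. h' x = h x" by eventually_elim (simp add: h'_def)
qed

lemma orbit_average_measurable[measurable]:
  assumes [measurable]: "W \<in> borel_measurable M"
  shows "orbit_average T c K W \<in> borel_measurable M"
  unfolding orbit_average_def by measurable

lemma AE_abs_orbit_average_le:
  assumes "convex_weights c K" "AE x in M. \<bar>W x\<bar> \<le> B"
  shows "AE x in M. \<bar>orbit_average T c K W x\<bar> \<le> B"
proof -
  have "AE x in M. \<forall>k. \<bar>W ((T ^^ k) x)\<bar> \<le> B"
    by (simp add: AE_all_countable AE_funpow[OF assms(2)])
  then show ?thesis by eventually_elim (simp add: abs_orbit_average_le[OF assms(1)])
qed

lemma integral_orbit_average_mult_invariant:
  assumes c: "convex_weights c K"
    and [measurable]: "W \<in> borel_measurable M" "h \<in> borel_measurable M"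
    and W: "AE x in M. \<bar>W x\<bar> \<le> B" and h: "AE x in M. \<bar>h x\<bar> \<le> C"
    and inv: "AE x in M. h (T x) = h x"
  shows "(\<integral>x. orbit_average T c K W x * h x \<partial>M) = (\<integral>x. W x * h x \<partial>M)"
proof -
  have int_k: "integrable M (\<lambda>x. W ((T ^^ k) x) * h x)" for k
    by (rule integrable_mult_AE_abs_bounded[OF _ _ AE_funpow[OF W] h]) measurable
  have term_k: "(\<integral>x. W ((T ^^ k) x) * h x \<partial>M) = (\<integral>x. W x * h x \<partial>M)" for k
  proof -
    have "(\<integral>x. W ((T ^^ k) x) * h x \<partial>M) = (\<integral>x. W ((T ^^ k) x) * h ((T ^^ k) x) \<partial>M)"
      by (rule integral_cong_AE) (use AE_invariant_funpow[OF inv, of k] in auto)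
    also have "\<dots> = (\<integral>x. W x * h x \<partial>M)" by (rule integral_funpow) measurable
    finally show ?thesis .
  qed
  have "(\<integral>x. orbit_average T c K W x * h x \<partial>M) = (\<integral>x. (\<Sum>k<K. c k * (W ((T ^^ k) x) * h x)) \<partial>M)"
    unfolding orbit_average_def by (simp add: sum_distrib_right mult.assoc)
  also have "\<dots> = (\<Sum>k<K. c k * (\<integral>x. W ((T ^^ k) x) * h x \<partial>M))"
    using int_k by simp
  also have "\<dots> = (\<integral>x. W x * h x \<partial>M)"
    using c by (simp add: term_k convex_weights_def sum_distrib_right[symmetric])
  finally show ?thesis .
qed

text \<open>Averaging along the orbit does not change the projection onto the invariant functions, so
  Cauchy-Schwarz compares the two norms.\<close>
lemma integral_cond_exp_Inv_sq_le:
  assumes c: "convex_weights c K" and [measurable]: "F \<in> borel_measurable M"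
    and F: "AE x in M. \<bar>F x\<bar> \<le> B"
  shows "(\<integral>x. (real_cond_exp M (Inv M T) F x)\<^sup>2 \<partial>M) \<le> (\<integral>x. (orbit_average T c K F x)\<^sup>2 \<partial>M)"
proof -
  let ?P = "real_cond_exp M (Inv M T) F" and ?A = "orbit_average T c K F"
  have "integrable M F" by (rule integrable_AE_abs_bounded[OF _ F]) measurable
  then have P: "AE x in M. \<bar>?P x\<bar> \<le> B" by (rule Inv.real_cond_exp_abs_le[OF _ F])
  have A: "AE x in M. \<bar>?A x\<bar> \<le> B" by (rule AE_abs_orbit_average_le[OF c F])
  have P_inv: "AE x in M. ?P (T x) = ?P x"
    by (intro AE_I2 measurable_Inv_invariant[OF T_in_space]) simp_all
  have "(\<integral>x. ?A x * ?P x \<partial>M) = (\<integral>x. F x * ?P x \<partial>M)"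
    by (rule integral_orbit_average_mult_invariant[OF c _ _ F P P_inv]) measurable
  also have "\<dots> = (\<integral>x. ?P x * F x \<partial>M)" by (simp only: mult.commute)
  also have "\<dots> = (\<integral>x. ?P x * ?P x \<partial>M)"
    by (rule Inv.real_cond_exp_intg(2)[symmetric])
       (auto intro: integrable_mult_AE_abs_bounded[OF _ _ P F])
  finally have AP: "(\<integral>x. ?A x * ?P x \<partial>M) = (\<integral>x. ?P x * ?P x \<partial>M)" .
  have "(\<integral>x. ?A x * ?P x \<partial>M)\<^sup>2 \<le> (\<integral>x. (?A x)\<^sup>2 \<partial>M) * (\<integral>x. (?P x)\<^sup>2 \<partial>M)"
    by (rule Cauchy_Schwarz_ineq_integral)
       (auto intro: integrable_square_AE_abs_bounded[OF _ A] integrable_square_AE_abs_bounded[OF _ P]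
         integrable_mult_AE_abs_bounded[OF _ _ A P])
  then have sq: "(\<integral>x. (?P x)\<^sup>2 \<partial>M) * (\<integral>x. (?P x)\<^sup>2 \<partial>M) \<le> (\<integral>x. (?A x)\<^sup>2 \<partial>M) * (\<integral>x. (?P x)\<^sup>2 \<partial>M)"
    unfolding AP by (simp only: power2_eq_square)
  have nonneg: "0 \<le> (\<integral>x. (?A x)\<^sup>2 \<partial>M)" by (rule integral_nonneg_AE) simp
  have cancel: "a \<le> b" if "a * a \<le> b * a" "0 \<le> b" for a b :: real
    using that by (smt (verit) mult_le_cancel_right)
  show ?thesis by (rule cancel[OF sq nonneg])
qed

lemma cond_exp_Inv_eq_0_of_integral_square_nonpos:
  assumes F: "bdd_meas M F" and le: "(\<integral>x. (real_cond_exp M (Inv M T) F x)\<^sup>2 \<partial>M) \<le> 0"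
  shows "AE x in M. real_cond_exp M (Inv M T) F x = 0"
proof -
  obtain B where "AE x in M. \<bar>F x\<bar> \<le> B" using bdd_meas_AE_bound[OF F] by blast
  then have "AE x in M. \<bar>real_cond_exp M (Inv M T) F x\<bar> \<le> B"
    by (rule Inv.real_cond_exp_abs_le[OF bdd_meas_integrable[OF F]])
  then have "integrable M (\<lambda>x. (real_cond_exp M (Inv M T) F x)\<^sup>2)"
    by (rule integrable_square_AE_abs_bounded[rotated]) simp
  moreover have "0 \<le> (\<integral>x. (real_cond_exp M (Inv M T) F x)\<^sup>2 \<partial>M)" by simp
  with le have "(\<integral>x. (real_cond_exp M (Inv M T) F x)\<^sup>2 \<partial>M) = 0" by linarith
  ultimately have "AE x in M. (real_cond_exp M (Inv M T) F x)\<^sup>2 = 0"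
    by (simp add: integral_nonneg_eq_0_iff_AE)
  then show ?thesis by eventually_elim simp
qed

lemma orbit_average_parallelogram:
  assumes [measurable]: "W \<in> borel_measurable M" and W: "AE x in M. \<bar>W x\<bar> \<le> B"
    and lower: "\<And>c K. convex_weights c K \<Longrightarrow> d \<le> (\<integral>x. (orbit_average T c K W x)\<^sup>2 \<partial>M)"
    and c: "convex_weights c K" and c': "convex_weights c' K'"
    and near: "(\<integral>x. (orbit_average T c K W x)\<^sup>2 \<partial>M) \<le> d + \<epsilon>"
      "(\<integral>x. (orbit_average T c' K' W x)\<^sup>2 \<partial>M) \<le> d + \<epsilon>"
  shows "(\<integral>x. (orbit_average T c K W x - orbit_average T c' K' W x)\<^sup>2 \<partial>M) \<le> 4 * \<epsilon>"
proof -
  obtain c'' K'' where c'': "convex_weights c'' K''"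
    and mid: "\<And>x. orbit_average T c'' K'' W x = (orbit_average T c K W x + orbit_average T c' K' W x) / 2"
    using orbit_average_midpoint[OF c c', where T=T and W=W] by blast
  let ?a = "orbit_average T c K W" and ?b = "orbit_average T c' K' W" and ?m = "orbit_average T c'' K'' W"
  have sq_int: "integrable M (\<lambda>x. (orbit_average T e L W x)\<^sup>2)" if "convex_weights e L" for e L
    by (rule integrable_square_AE_abs_bounded[OF _ AE_abs_orbit_average_le[OF that W]]) measurable
  have "(\<integral>x. (?a x - ?b x)\<^sup>2 \<partial>M) = (\<integral>x. 2 * (?a x)\<^sup>2 + 2 * (?b x)\<^sup>2 - 4 * (?m x)\<^sup>2 \<partial>M)"
    by (rule Bochner_Integration.integral_cong) (auto simp: mid power2_eq_square field_simps)
  also have "\<dots> = 2 * (\<integral>x. (?a x)\<^sup>2 \<partial>M) + 2 * (\<integral>x. (?b x)\<^sup>2 \<partial>M) - 4 * (\<integral>x. (?m x)\<^sup>2 \<partial>M)"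
    using sq_int[OF c] sq_int[OF c'] sq_int[OF c''] by simp
  finally show ?thesis using lower[OF c''] near by linarith
qed

lemma AE_invariant_of_limit:
  fixes \<phi> :: "nat \<Rightarrow> 'a \<Rightarrow> real"
  assumes [measurable]: "\<And>j. \<phi> j \<in> borel_measurable M" "h \<in> borel_measurable M"
    and bound: "\<And>j. AE x in M. \<bar>\<phi> j x\<bar> \<le> B"
    and lim: "AE x in M. (\<lambda>j. \<phi> j x) \<longlonglongrightarrow> h x"
    and shift: "(\<lambda>j. \<integral>x. (\<phi> j (T x) - \<phi> j x)\<^sup>2 \<partial>M) \<longlonglongrightarrow> 0"
  shows "AE x in M. h (T x) = h x"
proof -
  have diff_bound: "AE x in M. \<bar>\<phi> j (T x) - \<phi> j x\<bar> \<le> 2 * B" for j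
    using AE_funpow[OF bound[of j], of 1] bound[of j] by eventually_elim auto
  have "(\<lambda>j. \<integral>x. (\<phi> j (T x) - \<phi> j x)\<^sup>2 \<partial>M) \<longlonglongrightarrow> (\<integral>x. (h (T x) - h x)\<^sup>2 \<partial>M)"
  proof (rule integral_bounded_convergence)
    show "AE x in M. (\<lambda>j. (\<phi> j (T x) - \<phi> j x)\<^sup>2) \<longlonglongrightarrow> (h (T x) - h x)\<^sup>2"
      using AE_funpow[OF lim, of 1] lim by eventually_elim (auto intro!: tendsto_intros)
    show "AE x in M. \<bar>(\<phi> j (T x) - \<phi> j x)\<^sup>2\<bar> \<le> 2 * B * (2 * B)" for j
      using AE_abs_mult_le[OF diff_bound[of j] diff_bound[of j]] by (simp add: power2_eq_square)
  qed measurable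
  then have "(\<integral>x. (h (T x) - h x)\<^sup>2 \<partial>M) = 0" using shift LIMSEQ_unique by blast
  moreover have "AE x in M. \<bar>h (T x) - h x\<bar> \<le> 2 * B"
    using AE_funpow[OF AE_abs_limit_le[OF lim bound], of 1] AE_abs_limit_le[OF lim bound]
    by eventually_elim auto
  then have "integrable M (\<lambda>x. (h (T x) - h x)\<^sup>2)"
    by (rule integrable_square_AE_abs_bounded[rotated]) measurable
  ultimately have "AE x in M. (h (T x) - h x)\<^sup>2 = 0" by (simp add: integral_nonneg_eq_0_iff_AE)
  then show ?thesis by eventually_elim simp
qed

lemma integral_mult_invariant_eq_0:
  assumes [measurable]: "W \<in> borel_measurable M" "h \<in> borel_measurable M"
    and W: "AE x in M. \<bar>W x\<bar> \<le> B" and h: "AE x in M. \<bar>h x\<bar> \<le> C"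
    and inv: "AE x in M. h (T x) = h x"
    and W_perp: "AE x in M. real_cond_exp M (Inv M T) W x = 0"
  shows "(\<integral>x. W x * h x \<partial>M) = 0"
proof -
  obtain h' where h'_Inv[measurable]: "h' \<in> borel_measurable (Inv M T)" and h'h: "AE x in M. h' x = h x"
    using AE_invariant_Inv_version[OF assms(2) inv] by blast
  have [measurable]: "h' \<in> borel_measurable M" by (rule measurable_from_subalg[OF Inv.subalg h'_Inv])
  have h': "AE x in M. \<bar>h' x\<bar> \<le> C" using h'h h by eventually_elim simp
  have "(\<integral>x. W x * h x \<partial>M) = (\<integral>x. h' x * W x \<partial>M)"
    by (rule integral_cong_AE) (use h'h in auto)
  also have "\<dots> = (\<integral>x. h' x * real_cond_exp M (Inv M T) W x \<partial>M)"
    by (rule Inv.real_cond_exp_intg(2)[symmetric])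
       (auto intro: integrable_mult_AE_abs_bounded[OF _ _ h' W])
  also have "\<dots> = 0" using W_perp by (auto intro: integral_eq_zero_AE)
  finally show ?thesis .
qed

text \<open>The orbit averages form a convex set, so by the parallelogram law a minimising sequence of
  them is Cauchy in \<open>L\<^sup>2\<close>; shifting an average by \<open>T\<close> keeps it minimising, so the limit is invariant.\<close>
lemma minimizing_orbit_averages_converge:
  assumes [measurable]: "W \<in> borel_measurable M" and W: "AE x in M. \<bar>W x\<bar> \<le> B"
    and lower: "\<And>c K. convex_weights c K \<Longrightarrow> d \<le> (\<integral>x. (orbit_average T c K W x)\<^sup>2 \<partial>M)"
    and cK: "\<And>j. convex_weights (c j) (K j)"
    and small: "\<And>j. (\<integral>x. (orbit_average T (c j) (K j) W x)\<^sup>2 \<partial>M) < d + (1/4)^j"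
  obtains h where "h \<in> borel_measurable M" "AE x in M. \<bar>h x\<bar> \<le> B"
    "AE x in M. (\<lambda>j. orbit_average T (c j) (K j) W x) \<longlonglongrightarrow> h x" "AE x in M. h (T x) = h x"
proof -
  define \<phi> where "\<phi> j = orbit_average T (c j) (K j) W" for j
  have [measurable]: "\<phi> j \<in> borel_measurable M" for j unfolding \<phi>_def by measurable
  have \<phi>_bound: "AE x in M. \<bar>\<phi> j x\<bar> \<le> B" for j
    unfolding \<phi>_def by (rule AE_abs_orbit_average_le[OF cK W])
  have near: "(\<integral>x. (\<phi> j x)\<^sup>2 \<partial>M) \<le> d + (1/4)^j" "(\<integral>x. (\<phi> (Suc j) x)\<^sup>2 \<partial>M) \<le> d + (1/4)^j"
    for j
    using small[of j] small[of "Suc j"] power_decreasing[of j "Suc j" "1/4::real"]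
    unfolding \<phi>_def by linarith+
  have step: "(\<integral>x. (\<phi> (Suc j) x - \<phi> j x)\<^sup>2 \<partial>M) \<le> 4 * (1/4)^j" for j
    using near(2,1)[of j] unfolding \<phi>_def
    by (intro orbit_average_parallelogram[OF _ W lower cK cK]) simp_all
  have shift: "(\<integral>x. (\<phi> j (T x) - \<phi> j x)\<^sup>2 \<partial>M) \<le> 4 * (1/4)^j" for j
  proof -
    obtain c' K' where c': "convex_weights c' K'" and sh: "\<And>x. orbit_average T c' K' W x = \<phi> j (T x)"
      unfolding \<phi>_def using orbit_average_shift[OF cK, where T=T and W=W] by blast
    have "(\<integral>x. (\<phi> j (T x))\<^sup>2 \<partial>M) = (\<integral>x. (\<phi> j x)\<^sup>2 \<partial>M)" by (rule integral_T) measurable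
    then have "(\<integral>x. (orbit_average T c' K' W x)\<^sup>2 \<partial>M) \<le> d + (1/4)^j" unfolding sh using near(1) by simp
    then have "(\<integral>x. (orbit_average T c' K' W x - \<phi> j x)\<^sup>2 \<partial>M) \<le> 4 * (1/4)^j"
      using near(1)[of j] unfolding \<phi>_def by (intro orbit_average_parallelogram[OF _ W lower c' cK]) simp_all
    then show ?thesis unfolding sh .
  qed
  have "AE x in M. convergent (\<lambda>j. \<phi> j x)"
    by (rule AE_convergent_of_square_steps[OF _ \<phi>_bound step]) measurable
  then have lim: "AE x in M. (\<lambda>j. \<phi> j x) \<longlonglongrightarrow> lim (\<lambda>j. \<phi> j x)"
    by eventually_elim (simp add: convergent_LIMSEQ_iff)
  have "(\<lambda>j. \<integral>x. (\<phi> j (T x) - \<phi> j x)\<^sup>2 \<partial>M) \<longlonglongrightarrow> 0"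
  proof (rule tendsto_sandwich[OF _ _ tendsto_const])
    show "(\<lambda>j. 4 * (1/4::real)^j) \<longlonglongrightarrow> 0" by (intro tendsto_mult_right_zero LIMSEQ_power_zero) simp
  qed (use shift in auto)
  then have "AE x in M. lim (\<lambda>j. \<phi> j (T x)) = lim (\<lambda>j. \<phi> j x)"
    by (intro AE_invariant_of_limit[OF _ _ \<phi>_bound lim]) measurable
  with AE_abs_limit_le[OF lim \<phi>_bound] lim show ?thesis
    by (intro that[of "\<lambda>x. lim (\<lambda>j. \<phi> j x)"]) (simp_all add: \<phi>_def)
qed

theorem mean_ergodic_orbit_average:
  assumes [measurable]: "W \<in> borel_measurable M" and W: "AE x in M. \<bar>W x\<bar> \<le> B"
    and W_perp: "AE x in M. real_cond_exp M (Inv M T) W x = 0" and "0 < \<epsilon>"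
  shows "\<exists>c K. convex_weights c K \<and> (\<integral>x. (orbit_average T c K W x)\<^sup>2 \<partial>M) < \<epsilon>"
proof -
  let ?E = "{\<integral>x. (orbit_average T c K W x)\<^sup>2 \<partial>M | c K. convex_weights c K}"
  define d where "d = Inf ?E"
  have lower: "d \<le> (\<integral>x. (orbit_average T c K W x)\<^sup>2 \<partial>M)" if "convex_weights c K" for c K
    unfolding d_def by (rule cInf_lower) (use that in \<open>auto intro!: bdd_belowI[of _ 0]\<close>)
  have "\<exists>c K. convex_weights c K \<and> (\<integral>x. (orbit_average T c K W x)\<^sup>2 \<partial>M) < d + (1/4)^j" for j :: nat
  proof -
    have "?E \<noteq> {}" using convex_weights_one by blast
    from cInf_lessD[OF this, of "d + (1/4)^j"] show ?thesis unfolding d_def by auto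
  qed
  then obtain c K where cK: "\<And>j. convex_weights (c j) (K j)"
    and small: "\<And>j. (\<integral>x. (orbit_average T (c j) (K j) W x)\<^sup>2 \<partial>M) < d + (1/4)^j"
    by metis
  obtain h where [measurable]: "h \<in> borel_measurable M" and h: "AE x in M. \<bar>h x\<bar> \<le> B"
    and lim: "AE x in M. (\<lambda>j. orbit_average T (c j) (K j) W x) \<longlonglongrightarrow> h x"
    and inv: "AE x in M. h (T x) = h x"
    by (rule minimizing_orbit_averages_converge[OF _ W lower cK small]) auto
  have avg_bound: "AE x in M. \<bar>orbit_average T (c j) (K j) W x\<bar> \<le> B" for j
    by (rule AE_abs_orbit_average_le[OF cK W])
  have "(\<lambda>j. \<integral>x. orbit_average T (c j) (K j) W x * h x \<partial>M) \<longlonglongrightarrow> (\<integral>x. h x * h x \<partial>M)"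
  proof (rule integral_bounded_convergence)
    show "AE x in M. (\<lambda>j. orbit_average T (c j) (K j) W x * h x) \<longlonglongrightarrow> h x * h x"
      using lim by eventually_elim (rule tendsto_mult[OF _ tendsto_const])
    show "AE x in M. \<bar>orbit_average T (c j) (K j) W x * h x\<bar> \<le> B * B" for j
      by (rule AE_abs_mult_le[OF avg_bound h])
  qed measurable
  moreover have "(\<integral>x. orbit_average T (c j) (K j) W x * h x \<partial>M) = 0" for j
  proof -
    have "(\<integral>x. orbit_average T (c j) (K j) W x * h x \<partial>M) = (\<integral>x. W x * h x \<partial>M)"
      by (rule integral_orbit_average_mult_invariant[OF cK _ _ W h inv]) measurable
    also have "\<dots> = 0" by (rule integral_mult_invariant_eq_0[OF _ _ W h inv W_perp]) measurable
    finally show ?thesis .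
  qed
  ultimately have "(\<integral>x. (h x)\<^sup>2 \<partial>M) = 0" by (simp add: LIMSEQ_const_iff power2_eq_square)
  moreover have "(\<lambda>j. \<integral>x. (orbit_average T (c j) (K j) W x)\<^sup>2 \<partial>M) \<longlonglongrightarrow> (\<integral>x. (h x)\<^sup>2 \<partial>M)"
  proof (rule integral_bounded_convergence)
    show "AE x in M. (\<lambda>j. (orbit_average T (c j) (K j) W x)\<^sup>2) \<longlonglongrightarrow> (h x)\<^sup>2"
      using lim by eventually_elim (rule tendsto_power)
    show "AE x in M. \<bar>(orbit_average T (c j) (K j) W x)\<^sup>2\<bar> \<le> B * B" for j
      using AE_abs_mult_le[OF avg_bound[of j] avg_bound[of j]] by (simp add: power2_eq_square)
  qed measurable
  ultimately have "\<forall>\<^sub>F j in sequentially. (\<integral>x. (orbit_average T (c j) (K j) W x)\<^sup>2 \<partial>M) < \<epsilon>"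
    using \<open>0 < \<epsilon>\<close> by (simp add: order_tendstoD(2))
  then obtain j where "(\<integral>x. (orbit_average T (c j) (K j) W x)\<^sup>2 \<partial>M) < \<epsilon>"
    using eventually_happens'[OF sequentially_bot] by blast
  then show ?thesis using cK by blast
qed

lemma real_cond_exp_Inv_commuting:
  assumes bij: "bij_betw T (space M) (space M)"
    and inv_meas: "the_inv_into (space M) T \<in> measurable M M"
    and S: "S \<in> space M \<rightarrow> space M" and comm: "\<And>x. x \<in> space M \<Longrightarrow> S (T x) = T (S x)"
    and f: "integrable M f"
  shows "AE x in M. real_cond_exp M (Inv M S) (\<lambda>x. f (T x)) x = real_cond_exp M (Inv M S) f (T x)"
proof -
  interpret J: sigma_finite_subalgebra M "Inv M S"
    by (rule sigma_finite_subalgebra_Inv) unfold_locales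
  let ?Ti = "the_inv_into (space M) T"
  have Ti_T: "?Ti (T x) = x" if "x \<in> space M" for x
    using bij that by (simp add: bij_betw_def the_inv_into_f_f)
  have T_Ti: "T (?Ti y) = y" and Ti_space: "?Ti y \<in> space M" if "y \<in> space M" for y
    using bij that by (auto simp: bij_betw_def f_the_inv_into_f the_inv_into_into)
  have T_J[measurable]: "T \<in> measurable (Inv M S) (Inv M S)"
    by (rule measurable_Inv_commuting[OF measurable_T S]) (simp add: comm)
  have Ti_J: "?Ti \<in> measurable (Inv M S) (Inv M S)"
  proof (rule measurable_Inv_commuting[OF inv_meas S])
    fix y assume y: "y \<in> space M"
    have "T (S (?Ti y)) = S y" using comm[OF Ti_space[OF y]] T_Ti[OF y] by simp
    then show "?Ti (S y) = S (?Ti y)" using Ti_T S Ti_space[OF y] by (metis Pi_iff)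
  qed
  have [measurable]: "f \<in> borel_measurable M" using f by auto
  show ?thesis
  proof (rule J.real_cond_exp_charact)
    show "integrable M (\<lambda>x. f (T x))"
      using integrable_distr_eq[OF measurable_T, of f] f mpt by (simp add: mpt_def)
    show "integrable M (\<lambda>x. real_cond_exp M (Inv M S) f (T x))"
      using integrable_distr_eq[OF measurable_T, of "real_cond_exp M (Inv M S) f"] mpt
        J.real_cond_exp_int(1)[OF f] by (simp add: mpt_def)
    show "(\<lambda>x. real_cond_exp M (Inv M S) f (T x)) \<in> borel_measurable (Inv M S)" by measurable
    fix A assume A: "A \<in> sets (Inv M S)"
    define A' where "A' = ?Ti -` A \<inter> space M"
    have A'_Inv: "A' \<in> sets (Inv M S)"
      unfolding A'_def using measurable_sets[OF Ti_J A] by (simp add: space_Inv)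
    then have [measurable]: "A' \<in> sets M" using subalgebra_Inv[of M S] by (auto simp: subalgebra_def)
    have ind: "indicator A x = indicator A' (T x)" if "x \<in> space M" for x :: 'a
      using that Ti_T measurable_space[OF measurable_T that] unfolding A'_def by (auto simp: indicator_def)
    have "(\<integral>x\<in>A. f (T x) \<partial>M) = (\<integral>x. indicator A' (T x) * f (T x) \<partial>M)"
      unfolding set_lebesgue_integral_def by (rule Bochner_Integration.integral_cong) (auto simp: ind)
    also have "\<dots> = (\<integral>x. indicator A' x * f x \<partial>M)" by (rule integral_T) measurable
    also have "\<dots> = (\<integral>x\<in>A'. f x \<partial>M)" unfolding set_lebesgue_integral_def by simp
    also have "\<dots> = (\<integral>x\<in>A'. real_cond_exp M (Inv M S) f x \<partial>M)" by (rule J.real_cond_exp_intA[OF f A'_Inv])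
    also have "\<dots> = (\<integral>x. indicator A' x * real_cond_exp M (Inv M S) f x \<partial>M)"
      unfolding set_lebesgue_integral_def by simp
    also have "\<dots> = (\<integral>x. indicator A' (T x) * real_cond_exp M (Inv M S) f (T x) \<partial>M)"
      by (rule integral_T[symmetric]) measurable
    also have "\<dots> = (\<integral>x\<in>A. real_cond_exp M (Inv M S) f (T x) \<partial>M)"
      unfolding set_lebesgue_integral_def by (rule Bochner_Integration.integral_cong) (auto simp: ind)
    finally show "(\<integral>x\<in>A. f (T x) \<partial>M) = (\<integral>x\<in>A. real_cond_exp M (Inv M S) f (T x) \<partial>M)" .
  qed
qed

lemma bdd_meas_lag_product: "bdd_meas M u \<Longrightarrow> bdd_meas M (lag_product T u k l)"
proof -
  assume u: "bdd_meas M u"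
  obtain B where B: "0 \<le> B" "\<And>x. x \<in> space M \<Longrightarrow> \<bar>u x\<bar> \<le> B"
    using bdd_meas_nonneg_bound[OF u] by blast
  have [measurable]: "u \<in> borel_measurable M" using u by auto
  have "\<bar>lag_product T u k l x\<bar> \<le> B * B" if "x \<in> space M" for x
    using B measurable_space[OF measurable_compose_n[OF measurable_T] that]
    unfolding lag_product_def abs_mult by (intro mult_mono) auto
  moreover have "lag_product T u k l \<in> borel_measurable M" unfolding lag_product_def by measurable
  ultimately show ?thesis by (auto simp: bdd_meas_def)
qed

end

locale muS_system =
  fixes M :: "'a measure" and S T :: "'a \<Rightarrow> 'a" and \<mu>S :: "('a \<times> 'a) measure"
  assumes comm_system: "comm_system M S T" and is_muS: "is_muS M S \<mu>S"
begin

abbreviation "\<tau> \<equiv> map_prod T T"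
abbreviation "E\<^sub>S \<equiv> real_cond_exp M (Inv M S)"
abbreviation "E\<^sub>W \<equiv> real_cond_exp M (Wjoin M S T)"
abbreviation "E\<^sub>\<tau> \<equiv> real_cond_exp \<mu>S (Inv \<mu>S \<tau>)"

sublocale M: prob_mpt M T
  using comm_system by (simp add: comm_system_def inv_mpt_def prob_mpt_def prob_mpt_axioms_def)

lemma S_space: "S \<in> space M \<rightarrow> space M"
  using comm_system by (simp add: comm_system_def inv_mpt_def mpt_def measurable_def)

sublocale J: sigma_finite_subalgebra M "Inv M S"
  by (rule sigma_finite_subalgebra_Inv) unfold_locales

sublocale W: sigma_finite_subalgebra M "Wjoin M S T"
  by (rule finite_measure_subalgebra_is_sigma_finite)
     (simp add: finite_measure_subalgebra_def finite_measure_subalgebra_axioms_def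
       M.finite_measure_axioms subalgebra_Wjoin)

lemma cond_exp_S_comp_T:
  "integrable M f \<Longrightarrow> AE x in M. E\<^sub>S (\<lambda>x. f (T x)) x = E\<^sub>S f (T x)"
  using comm_system S_space
  by (intro M.real_cond_exp_Inv_commuting) (auto simp: comm_system_def inv_mpt_def)

lemma sets_muS[measurable_cong]: "sets \<mu>S = sets (M \<Otimes>\<^sub>M M)"
  using is_muS by (simp add: is_muS_def)

lemma space_muS: "space \<mu>S = space M \<times> space M"
  using sets_eq_imp_space_eq[OF sets_muS] by (simp add: space_pair_measure)

lemma prob_space_muS: "prob_space \<mu>S"
  using is_muS by (simp add: is_muS_def)

lemma integral_muS_tensor:
  "bdd_meas M u \<Longrightarrow> bdd_meas M v \<Longrightarrow> (\<integral>z. tensor u v z \<partial>\<mu>S) = (\<integral>x. E\<^sub>S u x * E\<^sub>S v x \<partial>M)"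
  using is_muS by (simp add: is_muS_def)

lemma measurable_tensor[measurable]:
  assumes [measurable]: "u \<in> borel_measurable M" "v \<in> borel_measurable M"
  shows "tensor u v \<in> borel_measurable \<mu>S"
  unfolding tensor_def measurable_cong_sets[OF sets_muS refl] by measurable

lemma bdd_meas_tensor: "bdd_meas M u \<Longrightarrow> bdd_meas M v \<Longrightarrow> bdd_meas \<mu>S (tensor u v)"
proof -
  assume u: "bdd_meas M u" and v: "bdd_meas M v"
  obtain A B where A: "0 \<le> A" "\<And>x. x \<in> space M \<Longrightarrow> \<bar>u x\<bar> \<le> A"
    and B: "\<And>x. x \<in> space M \<Longrightarrow> \<bar>v x\<bar> \<le> B"
    using bdd_meas_nonneg_bound[OF u] bdd_meas_nonneg_bound[OF v] by metis
  have "\<bar>tensor u v z\<bar> \<le> A * B" if "z \<in> space \<mu>S" for z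
    using that A B unfolding tensor_def abs_mult space_muS
    by (intro mult_mono) (auto simp: mem_Times_iff)
  moreover have "tensor u v \<in> borel_measurable \<mu>S" using u v by (intro measurable_tensor) auto
  ultimately show ?thesis unfolding bdd_meas_def by blast
qed

lemma measurable_map_prod_muS[measurable]: "\<tau> \<in> measurable \<mu>S \<mu>S"
  unfolding measurable_cong_sets[OF sets_muS sets_muS] map_prod_def by measurable

lemma emeasure_muS_Times:
  assumes "X \<in> sets M" "Y \<in> sets M"
  shows "emeasure \<mu>S (X \<times> Y) = ennreal (\<integral>x. E\<^sub>S (indicator X) x * E\<^sub>S (indicator Y) x \<partial>M)"
proof -
  interpret P: prob_space \<mu>S by (rule prob_space_muS)
  have "X \<times> Y \<in> sets \<mu>S" using assms by (simp add: sets_muS)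
  then have "emeasure \<mu>S (X \<times> Y) = ennreal (\<integral>z. indicator (X \<times> Y) z \<partial>\<mu>S)"
    by (simp add: P.emeasure_eq_measure)
  also have "indicator (X \<times> Y) = tensor (indicator X) (indicator Y)"
    by (auto simp: tensor_def indicator_def fun_eq_iff)
  also have "(\<integral>z. tensor (indicator X) (indicator Y) z \<partial>\<mu>S) = (\<integral>x. E\<^sub>S (indicator X) x * E\<^sub>S (indicator Y) x \<partial>M)"
    using assms by (intro integral_muS_tensor) (auto simp: bdd_meas_def intro!: exI[of _ 1])
  finally show ?thesis .
qed

lemma distr_muS_map_prod: "distr \<mu>S \<mu>S \<tau> = \<mu>S"
proof (rule measure_eqI_generator_eq[OF Int_stable_pair_measure_generator[of M M] pair_measure_closed,
      where A="\<lambda>_. space M \<times> space M"])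
  show "sets (distr \<mu>S \<mu>S \<tau>) = sigma_sets (space M \<times> space M) {a \<times> b |a b. a \<in> sets M \<and> b \<in> sets M}"
    "sets \<mu>S = sigma_sets (space M \<times> space M) {a \<times> b |a b. a \<in> sets M \<and> b \<in> sets M}"
    by (simp_all add: sets_muS sets_pair_measure)
  show "range (\<lambda>_. space M \<times> space M) \<subseteq> {a \<times> b |a b. a \<in> sets M \<and> b \<in> sets M}"
    "(\<Union>i. space M \<times> space M) = space M \<times> space M" by auto
  fix X assume "X \<in> {a \<times> b |a b. a \<in> sets M \<and> b \<in> sets M}"
  then obtain a b where X: "X = a \<times> b" and [measurable]: "a \<in> sets M" "b \<in> sets M" by auto
  have vimage: "\<tau> -` X \<inter> space \<mu>S = (T -` a \<inter> space M) \<times> (T -` b \<inter> space M)"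
    by (auto simp: X space_muS)
  have E_vimage: "AE x in M. E\<^sub>S (indicator (T -` A \<inter> space M)) x = E\<^sub>S (indicator A) (T x)"
    if [measurable]: "A \<in> sets M" for A
  proof -
    have "AE x in M. E\<^sub>S (indicator (T -` A \<inter> space M)) x = E\<^sub>S (\<lambda>x. indicator A (T x)) x"
      by (rule J.real_cond_exp_cong) (auto simp: indicator_def)
    moreover have "AE x in M. E\<^sub>S (\<lambda>x. indicator A (T x)) x = E\<^sub>S (indicator A) (T x)"
      by (rule cond_exp_S_comp_T) (auto intro!: M.integrable_AE_abs_bounded[where B=1] AE_I2)
    ultimately show ?thesis by auto
  qed
  have "emeasure (distr \<mu>S \<mu>S \<tau>) X = emeasure \<mu>S ((T -` a \<inter> space M) \<times> (T -` b \<inter> space M))"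
    using emeasure_distr[OF measurable_map_prod_muS, of X] X vimage by (simp add: sets_muS)
  also have "\<dots> = ennreal (\<integral>x. E\<^sub>S (indicator (T -` a \<inter> space M)) x * E\<^sub>S (indicator (T -` b \<inter> space M)) x \<partial>M)"
    by (rule emeasure_muS_Times) measurable
  also have "(\<integral>x. E\<^sub>S (indicator (T -` a \<inter> space M)) x * E\<^sub>S (indicator (T -` b \<inter> space M)) x \<partial>M)
      = (\<integral>x. E\<^sub>S (indicator a) (T x) * E\<^sub>S (indicator b) (T x) \<partial>M)"
    by (rule integral_cong_AE) (use E_vimage[of a] E_vimage[of b] in auto)
  also have "\<dots> = (\<integral>x. E\<^sub>S (indicator a) x * E\<^sub>S (indicator b) x \<partial>M)"
    by (rule M.integral_T[where g="\<lambda>x. E\<^sub>S (indicator a) x * E\<^sub>S (indicator b) x"]) measurable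
  finally show "emeasure (distr \<mu>S \<mu>S \<tau>) X = emeasure \<mu>S X"
    by (simp add: X emeasure_muS_Times)
qed (simp add: emeasure_distr finite_measure.emeasure_finite[OF prob_space.finite_measure[OF prob_space_muS]])

sublocale P: prob_mpt \<mu>S \<tau>
  using prob_space_muS distr_muS_map_prod by (simp add: prob_mpt_def prob_mpt_axioms_def mpt_def)

lemma measurable_fst_muS[measurable]: "fst \<in> measurable \<mu>S M"
  and measurable_snd_muS[measurable]: "snd \<in> measurable \<mu>S M"
  by (simp_all add: measurable_cong_sets[OF sets_muS refl])

lemma emeasure_muS_Times_space:
  assumes A: "A \<in> sets M"
  shows "emeasure \<mu>S (A \<times> space M) = emeasure M A" "emeasure \<mu>S (space M \<times> A) = emeasure M A"
proof -
  have "AE x in M. E\<^sub>S (indicator (space M)) x = E\<^sub>S (\<lambda>_. 1) x"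
    by (rule J.real_cond_exp_cong) (auto simp: indicator_def)
  moreover have "AE x in M. E\<^sub>S (\<lambda>_. 1) x = 1" using J.real_cond_exp_F_meas[of "\<lambda>_. 1"] by simp
  ultimately have one: "AE x in M. E\<^sub>S (indicator (space M)) x = 1" by eventually_elim simp
  have "(\<integral>x. E\<^sub>S (indicator A) x \<partial>M) = measure M A"
    using J.real_cond_exp_int(2)[of "indicator A"] A
    by (simp add: integrable_real_indicator M.emeasure_finite less_top[symmetric])
  then have "emeasure M A = ennreal (\<integral>x. E\<^sub>S (indicator A) x \<partial>M)" by (simp add: M.emeasure_eq_measure)
  also have "(\<integral>x. E\<^sub>S (indicator A) x \<partial>M) = (\<integral>x. E\<^sub>S (indicator A) x * E\<^sub>S (indicator (space M)) x \<partial>M)"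
    by (rule integral_cong_AE) (use one in auto)
  finally show "emeasure \<mu>S (A \<times> space M) = emeasure M A" "emeasure \<mu>S (space M \<times> A) = emeasure M A"
    using A by (simp_all add: emeasure_muS_Times mult.commute)
qed

lemma distr_muS_fst: "distr \<mu>S M fst = M"
  and distr_muS_snd: "distr \<mu>S M snd = M"
proof -
  have "fst -` A \<inter> space \<mu>S = A \<times> space M" "snd -` A \<inter> space \<mu>S = space M \<times> A"
    if "A \<in> sets M" for A
    using sets.sets_into_space[OF that] by (auto simp: space_muS)
  then show "distr \<mu>S M fst = M" "distr \<mu>S M snd = M"
    by (auto intro!: measure_eqI simp: emeasure_distr emeasure_muS_Times_space)
qed

lemma AE_muS_fst:
  assumes "AE x in M. P x" shows "AE z in \<mu>S. P (fst z)"
proof -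
  have "AE x in distr \<mu>S M fst. P x" unfolding distr_muS_fst by (rule assms)
  then show ?thesis by (rule AE_distrD[OF measurable_fst_muS])
qed

lemma AE_muS_snd:
  assumes "AE x in M. P x" shows "AE z in \<mu>S. P (snd z)"
proof -
  have "AE x in distr \<mu>S M snd. P x" unfolding distr_muS_snd by (rule assms)
  then show ?thesis by (rule AE_distrD[OF measurable_snd_muS])
qed

lemma integral_orbit_average_tensor_square:
  assumes u: "bdd_meas M u" and v: "bdd_meas M v"
  shows "(\<integral>z. (orbit_average \<tau> c K (tensor u v) z)\<^sup>2 \<partial>\<mu>S)
    = (\<Sum>k<K. \<Sum>l<K. c k * c l * (\<integral>x. E\<^sub>S (lag_product T u k l) x * E\<^sub>S (lag_product T v k l) x \<partial>M))"
proof -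
  have lag: "bdd_meas M (lag_product T u k l)" "bdd_meas M (lag_product T v k l)" for k l
    using M.bdd_meas_lag_product u v by blast+
  have "(\<integral>z. (orbit_average \<tau> c K (tensor u v) z)\<^sup>2 \<partial>\<mu>S)
      = (\<Sum>k<K. \<Sum>l<K. c k * c l * (\<integral>z. tensor (lag_product T u k l) (lag_product T v k l) z \<partial>\<mu>S))"
    unfolding orbit_average_tensor_square
    using P.bdd_meas_integrable[OF bdd_meas_tensor[OF lag]] by (simp add: Bochner_Integration.integral_sum)
  then show ?thesis by (simp add: integral_muS_tensor[OF lag])
qed

text \<open>The defining property of \<open>\<mu>S\<close> turns the average of \<open>u \<otimes> v\<close> into a positive combination of
  inner products in \<open>L\<^sup>2(\<mu>)\<close>, to which Cauchy-Schwarz applies twice.\<close>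
lemma integral_orbit_average_tensor_square_le:
  assumes u: "bdd_meas M u" and v: "bdd_meas M v" and c: "convex_weights c K"
  shows "(\<integral>z. (orbit_average \<tau> c K (tensor u v) z)\<^sup>2 \<partial>\<mu>S)
    \<le> sqrt (\<integral>z. (orbit_average \<tau> c K (tensor u u) z)\<^sup>2 \<partial>\<mu>S)
      * sqrt (\<integral>z. (orbit_average \<tau> c K (tensor v v) z)\<^sup>2 \<partial>\<mu>S)"
proof -
  define w where "w = (\<lambda>(k, l). c k * c l)"
  define a where "a = (\<lambda>(k, l). sqrt (\<integral>x. (E\<^sub>S (lag_product T u k l) x)\<^sup>2 \<partial>M))"
  define b where "b = (\<lambda>(k, l). sqrt (\<integral>x. (E\<^sub>S (lag_product T v k l) x)\<^sup>2 \<partial>M))"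
  let ?I = "{..<K} \<times> {..<K}"
  have w: "0 \<le> w i" if "i \<in> ?I" for i using c that by (auto simp: w_def convex_weights_def)
  have E_bound: "\<exists>B. AE x in M. \<bar>E\<^sub>S (lag_product T f k l) x\<bar> \<le> B" if "bdd_meas M f" for f k l
    using M.bdd_meas_lag_product[OF that] bdd_meas_AE_bound
      J.real_cond_exp_abs_le[OF M.bdd_meas_integrable] by metis
  have ab: "(\<integral>x. E\<^sub>S (lag_product T u k l) x * E\<^sub>S (lag_product T v k l) x \<partial>M) \<le> a (k, l) * b (k, l)" for k l
  proof -
    obtain A B where A: "AE x in M. \<bar>E\<^sub>S (lag_product T u k l) x\<bar> \<le> A"
      and B: "AE x in M. \<bar>E\<^sub>S (lag_product T v k l) x\<bar> \<le> B"
      using E_bound[OF u] E_bound[OF v] by blast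
    have "(\<integral>x. E\<^sub>S (lag_product T u k l) x * E\<^sub>S (lag_product T v k l) x \<partial>M)\<^sup>2
      \<le> (\<integral>x. (E\<^sub>S (lag_product T u k l) x)\<^sup>2 \<partial>M) * (\<integral>x. (E\<^sub>S (lag_product T v k l) x)\<^sup>2 \<partial>M)"
    proof (rule Cauchy_Schwarz_ineq_integral)
      show "integrable M (\<lambda>x. (E\<^sub>S (lag_product T u k l) x)\<^sup>2)"
        by (rule M.integrable_square_AE_abs_bounded[OF _ A]) measurable
      show "integrable M (\<lambda>x. (E\<^sub>S (lag_product T v k l) x)\<^sup>2)"
        by (rule M.integrable_square_AE_abs_bounded[OF _ B]) measurable
      show "integrable M (\<lambda>x. E\<^sub>S (lag_product T u k l) x * E\<^sub>S (lag_product T v k l) x)"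
        by (rule M.integrable_mult_AE_abs_bounded[OF _ _ A B]) measurable
    qed
    from real_sqrt_le_mono[OF this]
    have "\<bar>\<integral>x. E\<^sub>S (lag_product T u k l) x * E\<^sub>S (lag_product T v k l) x \<partial>M\<bar> \<le> a (k, l) * b (k, l)"
      unfolding a_def b_def by (simp add: real_sqrt_mult)
    then show ?thesis by (rule order_trans[OF abs_ge_self])
  qed
  have square_sum: "(\<integral>z. (orbit_average \<tau> c K (tensor f f) z)\<^sup>2 \<partial>\<mu>S)
      = (\<Sum>i\<in>?I. w i * (sqrt (\<integral>x. (E\<^sub>S (lag_product T f (fst i) (snd i)) x)\<^sup>2 \<partial>M))\<^sup>2)"
    if "bdd_meas M f" for f
    unfolding integral_orbit_average_tensor_square[OF that that] sum.cartesian_product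
    by (intro sum.cong refl) (auto simp: w_def power2_eq_square)
  have "(\<integral>z. (orbit_average \<tau> c K (tensor u v) z)\<^sup>2 \<partial>\<mu>S)
      = (\<Sum>(k, l)\<in>?I. c k * c l * (\<integral>x. E\<^sub>S (lag_product T u k l) x * E\<^sub>S (lag_product T v k l) x \<partial>M))"
    unfolding integral_orbit_average_tensor_square[OF u v] sum.cartesian_product ..
  also have "\<dots> \<le> (\<Sum>i\<in>?I. w i * (a i * b i))"
    by (rule sum_mono) (use ab w in \<open>auto simp: w_def intro!: mult_left_mono\<close>)
  also have "\<dots> \<le> sqrt (\<Sum>i\<in>?I. w i * (a i)\<^sup>2) * sqrt (\<Sum>i\<in>?I. w i * (b i)\<^sup>2)"
    by (rule Cauchy_Schwarz_ineq_weighted_sum[OF w])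
  also have "(\<Sum>i\<in>?I. w i * (a i)\<^sup>2) = (\<integral>z. (orbit_average \<tau> c K (tensor u u) z)\<^sup>2 \<partial>\<mu>S)"
    unfolding square_sum[OF u] by (intro sum.cong refl) (auto simp: a_def)
  also have "(\<Sum>i\<in>?I. w i * (b i)\<^sup>2) = (\<integral>z. (orbit_average \<tau> c K (tensor v v) z)\<^sup>2 \<partial>\<mu>S)"
    unfolding square_sum[OF v] by (intro sum.cong refl) (auto simp: b_def)
  finally show ?thesis .
qed

lemma integral_cond_exp_tensor_square_le:
  assumes u: "bdd_meas M u" and v: "bdd_meas M v" and c: "convex_weights c K"
  shows "(\<integral>z. (E\<^sub>\<tau> (tensor u v) z)\<^sup>2 \<partial>\<mu>S)
    \<le> sqrt (\<integral>z. (orbit_average \<tau> c K (tensor u u) z)\<^sup>2 \<partial>\<mu>S)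
      * sqrt (\<integral>z. (orbit_average \<tau> c K (tensor v v) z)\<^sup>2 \<partial>\<mu>S)"
proof -
  obtain B where "AE z in \<mu>S. \<bar>tensor u v z\<bar> \<le> B"
    using bdd_meas_AE_bound[OF bdd_meas_tensor[OF u v]] by blast
  then have "(\<integral>z. (E\<^sub>\<tau> (tensor u v) z)\<^sup>2 \<partial>\<mu>S) \<le> (\<integral>z. (orbit_average \<tau> c K (tensor u v) z)\<^sup>2 \<partial>\<mu>S)"
    using u v by (intro P.integral_cond_exp_Inv_sq_le[OF c]) auto
  also have "\<dots> \<le> sqrt (\<integral>z. (orbit_average \<tau> c K (tensor u u) z)\<^sup>2 \<partial>\<mu>S)
      * sqrt (\<integral>z. (orbit_average \<tau> c K (tensor v v) z)\<^sup>2 \<partial>\<mu>S)"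
    by (rule integral_orbit_average_tensor_square_le[OF u v c])
  finally show ?thesis .
qed

lemma sqrt_integral_orbit_average_tensor_square_le:
  assumes v: "bdd_meas M v" and B: "0 \<le> B" "AE x in M. \<bar>v x\<bar> \<le> B" and c: "convex_weights c K"
  shows "sqrt (\<integral>z. (orbit_average \<tau> c K (tensor v v) z)\<^sup>2 \<partial>\<mu>S) \<le> B * B"
proof -
  have "AE z in \<mu>S. \<bar>tensor v v z\<bar> \<le> B * B"
    using AE_muS_fst[OF B(2)] AE_muS_snd[OF B(2)] unfolding tensor_def
    by eventually_elim (simp add: abs_mult mult_mono' B(1))
  then have bound: "AE z in \<mu>S. \<bar>orbit_average \<tau> c K (tensor v v) z\<bar> \<le> B * B"
    by (rule P.AE_abs_orbit_average_le[OF c])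
  have "(\<integral>z. (orbit_average \<tau> c K (tensor v v) z)\<^sup>2 \<partial>\<mu>S) \<le> (B * B)\<^sup>2"
  proof (rule P.integral_le_const)
    show "integrable \<mu>S (\<lambda>z. (orbit_average \<tau> c K (tensor v v) z)\<^sup>2)"
      by (rule P.integrable_square_AE_abs_bounded[OF _ bound]) (use v in auto)
    show "AE z in \<mu>S. (orbit_average \<tau> c K (tensor v v) z)\<^sup>2 \<le> (B * B)\<^sup>2"
      using bound by eventually_elim (simp add: abs_le_square_iff[symmetric])
  qed
  from real_sqrt_le_mono[OF this] show ?thesis using B(1) by simp
qed

lemma ex_small_orbit_average_tensor_square:
  assumes u: "bdd_meas M u" and uu: "AE z in \<mu>S. E\<^sub>\<tau> (tensor u u) z = 0" and "0 < e"
  shows "\<exists>c K. convex_weights c K \<and> sqrt (\<integral>z. (orbit_average \<tau> c K (tensor u u) z)\<^sup>2 \<partial>\<mu>S) < e"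
proof -
  obtain A where "AE z in \<mu>S. \<bar>tensor u u z\<bar> \<le> A"
    using bdd_meas_AE_bound[OF bdd_meas_tensor[OF u u]] by blast
  then obtain c K where "convex_weights c K" "(\<integral>z. (orbit_average \<tau> c K (tensor u u) z)\<^sup>2 \<partial>\<mu>S) < e\<^sup>2"
    using P.mean_ergodic_orbit_average[OF _ _ uu, of A "e\<^sup>2"] u \<open>0 < e\<close> by auto
  moreover from real_sqrt_less_mono[OF this(2)] \<open>0 < e\<close>
  have "sqrt (\<integral>z. (orbit_average \<tau> c K (tensor u u) z)\<^sup>2 \<partial>\<mu>S) < e" by simp
  ultimately show ?thesis by blast
qed

text \<open>This is the van der Corput step: since the averages of \<open>u \<otimes> u\<close> can be made small in
  \<open>L\<^sup>2(\<mu>S)\<close> by the mean ergodic theorem, the projection of \<open>u \<otimes> v\<close> is squeezed to zero.\<close>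
lemma cond_exp_tensor_vanishes:
  assumes u: "bdd_meas M u" and v: "bdd_meas M v" and uu: "AE z in \<mu>S. E\<^sub>\<tau> (tensor u u) z = 0"
  shows "AE z in \<mu>S. E\<^sub>\<tau> (tensor u v) z = 0" "AE z in \<mu>S. E\<^sub>\<tau> (tensor v u) z = 0"
proof -
  obtain B where B: "0 \<le> B" "AE x in M. \<bar>v x\<bar> \<le> B" using bdd_meas_AE_bound[OF v] by blast
  note vv = sqrt_integral_orbit_average_tensor_square_le[OF v B]
  note uu_small = ex_small_orbit_average_tensor_square[OF u uu]
  have vanish: "AE z in \<mu>S. E\<^sub>\<tau> F z = 0"
    if F: "bdd_meas \<mu>S F" and le: "\<And>c K. convex_weights c K \<Longrightarrow> (\<integral>z. (E\<^sub>\<tau> F z)\<^sup>2 \<partial>\<mu>S)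
      \<le> sqrt (\<integral>z. (orbit_average \<tau> c K (tensor u u) z)\<^sup>2 \<partial>\<mu>S)
        * sqrt (\<integral>z. (orbit_average \<tau> c K (tensor v v) z)\<^sup>2 \<partial>\<mu>S)" for F
  proof (rule P.cond_exp_Inv_eq_0_of_integral_square_nonpos[OF F])
    show "(\<integral>z. (E\<^sub>\<tau> F z)\<^sup>2 \<partial>\<mu>S) \<le> 0"
    proof (rule nonpos_of_le_small_mult[where C="B * B"])
      fix e :: real assume "0 < e"
      then obtain c K where c: "convex_weights c K"
        and small: "sqrt (\<integral>z. (orbit_average \<tau> c K (tensor u u) z)\<^sup>2 \<partial>\<mu>S) < e"
        using uu_small by blast
      have "(\<integral>z. (E\<^sub>\<tau> F z)\<^sup>2 \<partial>\<mu>S) \<le> sqrt (\<integral>z. (orbit_average \<tau> c K (tensor u u) z)\<^sup>2 \<partial>\<mu>S) * (B * B)"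
        by (rule order_trans[OF le[OF c] mult_left_mono[OF vv[OF c]]]) simp
      then show "\<exists>a. 0 \<le> a \<and> a < e \<and> (\<integral>z. (E\<^sub>\<tau> F z)\<^sup>2 \<partial>\<mu>S) \<le> a * (B * B)"
        using small by (intro exI[of _ "sqrt (\<integral>z. (orbit_average \<tau> c K (tensor u u) z)\<^sup>2 \<partial>\<mu>S)"]) simp
    qed (use B in simp)
  qed
  show "AE z in \<mu>S. E\<^sub>\<tau> (tensor u v) z = 0"
    by (rule vanish[OF bdd_meas_tensor[OF u v] integral_cond_exp_tensor_square_le[OF u v]])
  show "AE z in \<mu>S. E\<^sub>\<tau> (tensor v u) z = 0"
    by (rule vanish[OF bdd_meas_tensor[OF v u]])
       (use integral_cond_exp_tensor_square_le[OF v u] in \<open>simp only: mult.commute\<close>)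
qed

lemma magic_cond_exp_tensor_square:
  assumes "magic M S T" and g: "bdd_meas M g" and "AE x in M. E\<^sub>W g x = 0"
  shows "AE z in \<mu>S. E\<^sub>\<tau> (tensor g g) z = 0"
proof (rule P.cond_exp_Inv_eq_0_of_integral_square_nonpos[OF bdd_meas_tensor[OF g g]])
  have "seminorm4 M T \<mu>S g = 0" using assms is_muS unfolding magic_def by blast
  then show "(\<integral>z. (E\<^sub>\<tau> (tensor g g) z)\<^sup>2 \<partial>\<mu>S) \<le> 0" by (simp add: seminorm4_def)
qed

theorem cond_exp_tensor_eq_cond_exp_tensor_Wjoin:
  assumes magic: "magic M S T" and f0: "bdd_meas M f0" and f1: "bdd_meas M f1"
  shows "AE z in \<mu>S. E\<^sub>\<tau> (tensor f0 f1) z = E\<^sub>\<tau> (tensor (E\<^sub>W f0) (E\<^sub>W f1)) z"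
proof -
  obtain h0 g0 where h0: "bdd_meas M h0" and g0: "bdd_meas M g0" and e0: "AE x in M. h0 x = E\<^sub>W f0 x"
    and f0_eq: "\<And>x. f0 x = h0 x + g0 x" and z0: "AE x in M. E\<^sub>W g0 x = 0"
    by (rule M.bdd_meas_cond_exp_decomposition[OF W.sigma_finite_subalgebra_axioms f0]) blast
  obtain h1 g1 where h1: "bdd_meas M h1" and g1: "bdd_meas M g1" and e1: "AE x in M. h1 x = E\<^sub>W f1 x"
    and f1_eq: "\<And>x. f1 x = h1 x + g1 x" and z1: "AE x in M. E\<^sub>W g1 x = 0"
    by (rule M.bdd_meas_cond_exp_decomposition[OF W.sigma_finite_subalgebra_axioms f1]) blast
  have Z0: "AE z in \<mu>S. E\<^sub>\<tau> (tensor g0 f1) z = 0"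
    by (rule cond_exp_tensor_vanishes(1)[OF g0 f1 magic_cond_exp_tensor_square[OF magic g0 z0]])
  have Z1: "AE z in \<mu>S. E\<^sub>\<tau> (tensor h0 g1) z = 0"
    by (rule cond_exp_tensor_vanishes(2)[OF g1 h0 magic_cond_exp_tensor_square[OF magic g1 z1]])
  have H: "AE z in \<mu>S. E\<^sub>\<tau> (tensor h0 h1) z = E\<^sub>\<tau> (tensor (E\<^sub>W f0) (E\<^sub>W f1)) z"
  proof (rule P.Inv.real_cond_exp_cong)
    show "AE z in \<mu>S. tensor h0 h1 z = tensor (E\<^sub>W f0) (E\<^sub>W f1) z"
      using AE_muS_fst[OF e0] AE_muS_snd[OF e1] by eventually_elim (simp add: tensor_def)
  qed (use h0 h1 in auto)
  have int: "integrable \<mu>S (tensor a b)" if "bdd_meas M a" "bdd_meas M b" for a b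
    by (rule P.bdd_meas_integrable[OF bdd_meas_tensor[OF that]])
  have split: "tensor f0 f1 = (\<lambda>z. tensor h0 h1 z + (tensor g0 f1 z + tensor h0 g1 z))"
    by (auto simp: tensor_def f0_eq f1_eq algebra_simps)
  have "AE z in \<mu>S. E\<^sub>\<tau> (\<lambda>z. tensor h0 h1 z + (tensor g0 f1 z + tensor h0 g1 z)) z
      = E\<^sub>\<tau> (tensor h0 h1) z + E\<^sub>\<tau> (\<lambda>z. tensor g0 f1 z + tensor h0 g1 z) z"
    using int h0 h1 g0 g1 f1 by (intro P.Inv.real_cond_exp_add) auto
  moreover have "AE z in \<mu>S. E\<^sub>\<tau> (\<lambda>z. tensor g0 f1 z + tensor h0 g1 z) z
      = E\<^sub>\<tau> (tensor g0 f1) z + E\<^sub>\<tau> (tensor h0 g1) z"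
    using int h0 g0 g1 f1 by (intro P.Inv.real_cond_exp_add) auto
  ultimately show ?thesis unfolding split using Z0 Z1 H by eventually_elim simp
qed

end

theorem lemma3p4:
  fixes M :: "'a measure" and S T :: "'a \<Rightarrow> 'a" and \<mu>S :: "('a \<times> 'a) measure"
  assumes "comm_system M S T" and "free M S T" and "magic M S T" and "ergodic2 M S T"
    and "is_muS M S \<mu>S"
    and "bdd_meas M f0" and "bdd_meas M f1"
  shows "AE z in \<mu>S.
     real_cond_exp \<mu>S (Inv \<mu>S (map_prod T T)) (tensor f0 f1) z
   = real_cond_exp \<mu>S (Inv \<mu>S (map_prod T T))
       (tensor (real_cond_exp M (Wjoin M S T) f0) (real_cond_exp M (Wjoin M S T) f1)) z"
proof -
  interpret muS_system M S T \<mu>S using assms(1,5) by unfold_locales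
  show ?thesis by (rule cond_exp_tensor_eq_cond_exp_tensor_Wjoin[OF assms(3,6,7)])
qed

end
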